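(* Let $R$ be a ring such that the set $\max\mathrm{Den}_l(R)$ of maximal left denominator sets of $R$ is finite, $\max\mathrm{Den}_l(R)=\{S_1,\ldots,S_n\}$ (with the $S_i$ distinct). Let $\mathfrak{a}_i:=\mathrm{ass}(S_i)$, let $\sigma_i:R\to R_i:=S_i^{-1}R$, $r\mapsto \frac{r}{1}=r_i$, and let $\sigma:=\prod_{i=1}^n\sigma_i:R\to\prod_{i=1}^n R_i$, $r\mapsto (r_1,\ldots,r_n)$. The following statements are equivalent: (1) $R$ is a left localizable ring; (2) $\mathfrak{l}_R=0$ and the rings $R_1,\ldots,R_n$ are division rings; (3) the homomorphism $\sigma$ is injective and the rings $R_1,\ldots,R_n$ are division rings.
   Context: All rings are associative with $1$. A multiplicative subset $S$ of a ring $R$ is a subset with $1\in S$, $0\notin S$, closed under multiplication. It is a left Ore set if $Sr\cap Rs\neq\emptyset$ for all $r\in R$, $s\in S$. For a left Ore set $S$, $\mathrm{ass}(S):=\{r\in R: sr=0 \text{ for some } s\in S\}$. A left Ore set $S$ is a left denominator set if $rs=0$ with $r\in R$, $s\in S$ implies $tr=0$ for some $t\in S$. $\mathrm{Den}_l(R)$ denotes the set of left denominator sets of $R$, $S^{-1}R$ the left localization (ring of left fractions $s^{-1}r$) of $R$ at $S\in\mathrm{Den}_l(R)$, and $\max\mathrm{Den}_l(R)$ the set of maximal elements of the poset $(\mathrm{Den}_l(R),\subseteq)$. The left localization radical is $\mathfrak{l}_R:=\bigcap_{S\in\max\mathrm{Den}_l(R)}\mathrm{ass}(S)$. An element $r\in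 R$ is left localizable if $r\in S$ for some $S\in\mathrm{Den}_l(R)$; a ring $R$ is a left localizable ring if every nonzero element of $R$ is left localizable. *)

theory Defs
  imports "HOL-Algebra.Ring" "HOL-Algebra.RingHom"
begin

definition mult_subset :: "('a, 'm) ring_scheme \<Rightarrow> 'a set \<Rightarrow> bool" where
  "mult_subset R S \<longleftrightarrow> S \<subseteq> carrier R \<and> \<one>\<^bsub>R\<^esub> \<in> S \<and> \<zero>\<^bsub>R\<^esub> \<notin> S \<and>
     (\<forall>s\<in>S. \<forall>t\<in>S. s \<otimes>\<^bsub>R\<^esub> t \<in> S)"

definition left_ore_set :: "('a, 'm) ring_scheme \<Rightarrow> 'a set \<Rightarrow> bool" where
  "left_ore_set R S \<longleftrightarrow> mult_subset R S \<and>
     (\<forall>r\<in>carrier R. \<forall>s\<in>S. \<exists>s'\<in>S. \<exists>r'\<in>carrier R. s' \<otimes>\<^bsub>R\<^esub> r = r' \<otimes>\<^bsub>R\<^esub> s)"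

definition ass :: "('a, 'm) ring_scheme \<Rightarrow> 'a set \<Rightarrow> 'a set" where
  "ass R S = {r \<in> carrier R. \<exists>s\<in>S. s \<otimes>\<^bsub>R\<^esub> r = \<zero>\<^bsub>R\<^esub>}"

definition left_den_set :: "('a, 'm) ring_scheme \<Rightarrow> 'a set \<Rightarrow> bool" where
  "left_den_set R S \<longleftrightarrow> left_ore_set R S \<and>
     (\<forall>r\<in>carrier R. \<forall>s\<in>S. r \<otimes>\<^bsub>R\<^esub> s = \<zero>\<^bsub>R\<^esub> \<longrightarrow> (\<exists>t\<in>S. t \<otimes>\<^bsub>R\<^esub> r = \<zero>\<^bsub>R\<^esub>))"

definition Den_l :: "('a, 'm) ring_scheme \<Rightarrow> 'a set set" where
  "Den_l R = {S. left_den_set R S}"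

definition maxDen_l :: "('a, 'm) ring_scheme \<Rightarrow> 'a set set" where
  "maxDen_l R = {S \<in> Den_l R. \<forall>T\<in>Den_l R. S \<subseteq> T \<longrightarrow> T = S}"

definition loc_radical :: "('a, 'm) ring_scheme \<Rightarrow> 'a set" where
  "loc_radical R = carrier R \<inter> (\<Inter>S\<in>maxDen_l R. ass R S)"

definition left_localizable_elem :: "('a, 'm) ring_scheme \<Rightarrow> 'a \<Rightarrow> bool" where
  "left_localizable_elem R r \<longleftrightarrow> (\<exists>S\<in>Den_l R. r \<in> S)"

definition left_localizable_ring :: "('a, 'm) ring_scheme \<Rightarrow> bool" where
  "left_localizable_ring R \<longleftrightarrow>
     (\<forall>r\<in>carrier R. r \<noteq> \<zero>\<^bsub>R\<^esub> \<longrightarrow> left_localizable_elem R r)"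

definition division_ring :: "('b, 'n) ring_scheme \<Rightarrow> bool" where
  "division_ring Q \<longleftrightarrow> ring Q \<and> \<one>\<^bsub>Q\<^esub> \<noteq> \<zero>\<^bsub>Q\<^esub> \<and>
     (\<forall>q\<in>carrier Q. q \<noteq> \<zero>\<^bsub>Q\<^esub> \<longrightarrow> q \<in> Units Q)"

(* (Q, sigma) is the left localization S^{-1}R of R at S with canonical map r \<mapsto> r/1:
   the standard characterization of the ring of left fractions:
   sigma is a ring homomorphism, sigma(S) consists of units,
   every element of Q is a left fraction sigma(s)^{-1} sigma(r), and ker sigma = ass S. *)
definition is_left_localization ::
  "('a, 'm) ring_scheme \<Rightarrow> 'a set \<Rightarrow> ('b, 'n) ring_scheme \<Rightarrow> ('a \<Rightarrow> 'b) \<Rightarrow> bool" where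
  "is_left_localization R S Q \<sigma> \<longleftrightarrow>
     ring Q \<and> \<sigma> \<in> ring_hom R Q \<and>
     (\<forall>s\<in>S. \<sigma> s \<in> Units Q) \<and>
     (\<forall>q\<in>carrier Q. \<exists>s\<in>S. \<exists>r\<in>carrier R. q = inv\<^bsub>Q\<^esub> (\<sigma> s) \<otimes>\<^bsub>Q\<^esub> \<sigma> r) \<and>
     {r \<in> carrier R. \<sigma> r = \<zero>\<^bsub>Q\<^esub>} = ass R S"

end

theory Submission
  imports Defs "HOL-Algebra.Divisibility"
begin

text \<open>
  If \<open>S\<close> is a maximal left denominator set with localization \<open>\<sigma> : R \<rightarrow> Q\<close>, the preimage of the
  units of \<open>Q\<close> is again a left denominator set containing \<open>S\<close>, so it equals \<open>S\<close>. Hence \<open>Q\<close> is a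
  division ring iff every element outside \<open>ass R S\<close> lies in \<open>S\<close>. This gives (2) \<Rightarrow> (1), while
  (2) \<Leftrightarrow> (3) holds because the kernel of \<open>\<sigma>\<close> is \<open>loc_radical R\<close>, which vanishes in a left localizable
  ring since \<open>S\<^sub>i\<close> and \<open>ass R S\<^sub>i\<close> are disjoint.

  For the division rings in (1) \<Rightarrow> (2) the key fact is that the intersection of all \<open>ass R S\<^sub>k\<close> with
  \<open>k \<noteq> i\<close> contains some \<open>y \<noteq> 0\<close>. Such a \<open>y\<close> lies in no \<open>S\<^sub>k\<close> with \<open>k \<noteq> i\<close>, hence in \<open>S\<^sub>i\<close>; for
  \<open>r \<notin> ass R S\<^sub>i\<close> the element \<open>y r\<close> is again such an element, so \<open>y r \<in> S\<^sub>i\<close> and therefore \<open>r \<in> S\<^sub>i\<close>.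
\<close>

lemma (in ring) minus_eq_zero_iff:
  "a \<in> carrier R \<Longrightarrow> b \<in> carrier R \<Longrightarrow> a \<ominus> b = \<zero> \<longleftrightarrow> a = b"
  by (metis a_minus_def add.inv_closed minus_equality r_neg)

lemma left_den_setD:
  assumes "left_den_set R S"
  shows "S \<subseteq> carrier R" "\<one>\<^bsub>R\<^esub> \<in> S" "\<zero>\<^bsub>R\<^esub> \<notin> S"
    "\<And>s t. s \<in> S \<Longrightarrow> t \<in> S \<Longrightarrow> s \<otimes>\<^bsub>R\<^esub> t \<in> S"
    "\<And>r s. r \<in> carrier R \<Longrightarrow> s \<in> S \<Longrightarrow> \<exists>s'\<in>S. \<exists>r'\<in>carrier R. s' \<otimes>\<^bsub>R\<^esub> r = r' \<otimes>\<^bsub>R\<^esub> s"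
    "\<And>r s. r \<in> carrier R \<Longrightarrow> s \<in> S \<Longrightarrow> r \<otimes>\<^bsub>R\<^esub> s = \<zero>\<^bsub>R\<^esub> \<Longrightarrow> \<exists>t\<in>S. t \<otimes>\<^bsub>R\<^esub> r = \<zero>\<^bsub>R\<^esub>"
  using assms unfolding left_den_set_def left_ore_set_def mult_subset_def by blast+

lemma left_den_set_Int_ass:
  assumes "left_den_set R S"
  shows "S \<inter> ass R S = {}"
  using left_den_setD(3,4)[OF assms] unfolding ass_def by fastforce

lemma zero_in_ass:
  assumes "ring R" "left_den_set R S"
  shows "\<zero>\<^bsub>R\<^esub> \<in> ass R S"
proof -
  interpret R: ring R by fact
  show ?thesis using left_den_setD[OF assms(2)] unfolding ass_def by force
qed

lemma ass_mult_left_closed: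
  assumes "ring R" "left_den_set R S" "x \<in> ass R S" "r \<in> carrier R"
  shows "r \<otimes>\<^bsub>R\<^esub> x \<in> ass R S"
proof -
  interpret R: ring R by fact
  obtain s where s: "s \<in> S" "s \<otimes>\<^bsub>R\<^esub> x = \<zero>\<^bsub>R\<^esub>" and x: "x \<in> carrier R"
    using assms(3) unfolding ass_def by blast
  obtain s' r' where s': "s' \<in> S" "r' \<in> carrier R" "s' \<otimes>\<^bsub>R\<^esub> r = r' \<otimes>\<^bsub>R\<^esub> s"
    using left_den_setD(5)[OF assms(2,4) s(1)] by blast
  have "s \<in> carrier R" "s' \<in> carrier R" using left_den_setD(1)[OF assms(2)] s s' by auto
  then have "s' \<otimes>\<^bsub>R\<^esub> (r \<otimes>\<^bsub>R\<^esub> x) = r' \<otimes>\<^bsub>R\<^esub> (s \<otimes>\<^bsub>R\<^esub> x)"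
    using s' x assms(4) by (metis R.m_assoc)
  also have "\<dots> = \<zero>\<^bsub>R\<^esub>" using s s' by simp
  finally show ?thesis using s' x assms(4) unfolding ass_def by auto
qed

lemma ass_mult_right_closed:
  assumes "ring R" "left_den_set R S" "x \<in> ass R S" "r \<in> carrier R"
  shows "x \<otimes>\<^bsub>R\<^esub> r \<in> ass R S"
proof -
  interpret R: ring R by fact
  obtain s where s: "s \<in> S" "s \<otimes>\<^bsub>R\<^esub> x = \<zero>\<^bsub>R\<^esub>" and x: "x \<in> carrier R"
    using assms(3) unfolding ass_def by blast
  have "s \<in> carrier R" using left_den_setD(1)[OF assms(2)] s by auto
  then have "s \<otimes>\<^bsub>R\<^esub> (x \<otimes>\<^bsub>R\<^esub> r) = \<zero>\<^bsub>R\<^esub>" using s x assms(4) by (metis R.m_assoc R.l_null)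
  then show ?thesis using s x assms(4) unfolding ass_def by auto
qed

lemma ass_cancel_left:
  assumes "ring R" "left_den_set R S" "s \<in> S" "x \<in> carrier R" "s \<otimes>\<^bsub>R\<^esub> x \<in> ass R S"
  shows "x \<in> ass R S"
proof -
  interpret R: ring R by fact
  obtain t where t: "t \<in> S" "t \<otimes>\<^bsub>R\<^esub> (s \<otimes>\<^bsub>R\<^esub> x) = \<zero>\<^bsub>R\<^esub>"
    using assms(5) unfolding ass_def by blast
  have "t \<in> carrier R" "s \<in> carrier R" using left_den_setD(1)[OF assms(2)] t assms(3) by auto
  then have "(t \<otimes>\<^bsub>R\<^esub> s) \<otimes>\<^bsub>R\<^esub> x = \<zero>\<^bsub>R\<^esub>" using t assms(4) by (metis R.m_assoc)
  moreover have "t \<otimes>\<^bsub>R\<^esub> s \<in> S" using left_den_setD(4)[OF assms(2) t(1) assms(3)] .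
  ultimately show ?thesis using assms(4) unfolding ass_def by blast
qed

lemma is_left_localizationD:
  assumes "is_left_localization R S Q \<sigma>"
  shows "ring Q" "\<sigma> \<in> ring_hom R Q" "\<And>s. s \<in> S \<Longrightarrow> \<sigma> s \<in> Units Q"
    "\<And>q. q \<in> carrier Q \<Longrightarrow> \<exists>s\<in>S. \<exists>r\<in>carrier R. q = inv\<^bsub>Q\<^esub> (\<sigma> s) \<otimes>\<^bsub>Q\<^esub> \<sigma> r"
    "\<And>x. x \<in> carrier R \<Longrightarrow> \<sigma> x = \<zero>\<^bsub>Q\<^esub> \<longleftrightarrow> x \<in> ass R S"
  using assms unfolding is_left_localization_def by blast+

lemma ring_hom_ring_left_localization:
  assumes "ring R" "is_left_localization R S Q \<sigma>"
  shows "ring_hom_ring R Q \<sigma>"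
  using assms is_left_localizationD[OF assms(2)]
  by (simp add: ring_hom_ring_def ring_hom_ring_axioms_def)

lemma left_localization_eq_iff:
  assumes "ring R" "is_left_localization R S Q \<sigma>" "a \<in> carrier R" "b \<in> carrier R"
  shows "\<sigma> a = \<sigma> b \<longleftrightarrow> a \<ominus>\<^bsub>R\<^esub> b \<in> ass R S"
proof -
  interpret R: ring R by fact
  interpret Q: ring Q using is_left_localizationD(1)[OF assms(2)] .
  interpret h: ring_hom_ring R Q \<sigma> using ring_hom_ring_left_localization[OF assms(1,2)] .
  have "\<sigma> (a \<ominus>\<^bsub>R\<^esub> b) = \<sigma> a \<ominus>\<^bsub>Q\<^esub> \<sigma> b" using assms(3,4) by (simp add: a_minus_def)
  then have "\<sigma> (a \<ominus>\<^bsub>R\<^esub> b) = \<zero>\<^bsub>Q\<^esub> \<longleftrightarrow> \<sigma> a = \<sigma> b"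
    using assms(3,4) Q.minus_eq_zero_iff by simp
  then show ?thesis using is_left_localizationD(5)[OF assms(2)] assms(3,4) by simp
qed

lemma left_localization_eqD:
  assumes "ring R" "left_den_set R S" "is_left_localization R S Q \<sigma>"
    "a \<in> carrier R" "b \<in> carrier R" "\<sigma> a = \<sigma> b"
  shows "\<exists>t\<in>S. t \<otimes>\<^bsub>R\<^esub> a = t \<otimes>\<^bsub>R\<^esub> b"
proof -
  interpret R: ring R by fact
  obtain t where t: "t \<in> S" "t \<otimes>\<^bsub>R\<^esub> (a \<ominus>\<^bsub>R\<^esub> b) = \<zero>\<^bsub>R\<^esub>"
    using left_localization_eq_iff[OF assms(1,3-5)] assms(6) unfolding ass_def by blast
  have "t \<in> carrier R" using t left_den_setD(1)[OF assms(2)] by auto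
  then have "t \<otimes>\<^bsub>R\<^esub> a \<ominus>\<^bsub>R\<^esub> t \<otimes>\<^bsub>R\<^esub> b = \<zero>\<^bsub>R\<^esub>"
    using t assms(4,5) by (simp add: a_minus_def R.r_distr R.r_minus)
  then show ?thesis using t \<open>t \<in> carrier R\<close> assms(4,5) R.minus_eq_zero_iff by auto
qed

lemma left_localization_one_neq_zero:
  assumes "ring R" "left_den_set R S" "is_left_localization R S Q \<sigma>"
  shows "\<one>\<^bsub>Q\<^esub> \<noteq> \<zero>\<^bsub>Q\<^esub>"
proof
  assume "\<one>\<^bsub>Q\<^esub> = \<zero>\<^bsub>Q\<^esub>"
  moreover have "\<sigma> \<one>\<^bsub>R\<^esub> = \<one>\<^bsub>Q\<^esub>" using is_left_localizationD(2)[OF assms(3)] by (rule ring_hom_one)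
  ultimately have "\<one>\<^bsub>R\<^esub> \<in> ass R S"
    using is_left_localizationD(5)[OF assms(3)] ring.ring_simprules(6)[OF assms(1)] by simp
  then show False using left_den_set_Int_ass[OF assms(2)] left_den_setD(2)[OF assms(2)] by blast
qed

lemma units_preimage_left_ore:
  assumes "ring R" "left_den_set R S" "is_left_localization R S Q \<sigma>"
    and r: "r \<in> carrier R" and u: "u \<in> carrier R" "\<sigma> u \<in> Units Q"
  shows "\<exists>u'\<in>{r \<in> carrier R. \<sigma> r \<in> Units Q}. \<exists>r'\<in>carrier R. u' \<otimes>\<^bsub>R\<^esub> r = r' \<otimes>\<^bsub>R\<^esub> u"
proof -
  interpret R: ring R by fact
  interpret Q: ring Q using is_left_localizationD(1)[OF assms(3)] .
  interpret h: ring_hom_ring R Q \<sigma> using ring_hom_ring_left_localization[OF assms(1,3)] .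
  have S: "S \<subseteq> carrier R" "\<And>s. s \<in> S \<Longrightarrow> \<sigma> s \<in> Units Q"
    using left_den_setD(1)[OF assms(2)] is_left_localizationD(3)[OF assms(3)] by auto
  \<comment> \<open>write the right fraction \<open>\<sigma> r (\<sigma> u)\<^sup>-\<^sup>1\<close> as a left fraction \<open>(\<sigma> s)\<^sup>-\<^sup>1 \<sigma> x\<close>\<close>
  define q where "q = \<sigma> r \<otimes>\<^bsub>Q\<^esub> inv\<^bsub>Q\<^esub> (\<sigma> u)"
  have q: "q \<in> carrier Q" using r u unfolding q_def by auto
  obtain s x where sx: "s \<in> S" "x \<in> carrier R" "q = inv\<^bsub>Q\<^esub> (\<sigma> s) \<otimes>\<^bsub>Q\<^esub> \<sigma> x"
    using is_left_localizationD(4)[OF assms(3) q] by blast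
  have s: "s \<in> carrier R" "\<sigma> s \<in> Units Q" using sx(1) S by auto
  have "\<sigma> (s \<otimes>\<^bsub>R\<^esub> r) = \<sigma> s \<otimes>\<^bsub>Q\<^esub> q \<otimes>\<^bsub>Q\<^esub> \<sigma> u"
    using r u s unfolding q_def by (simp add: Q.m_assoc)
  also have "\<dots> = \<sigma> (x \<otimes>\<^bsub>R\<^esub> u)"
    using sx s u by (simp add: Q.m_assoc[symmetric])
  finally obtain t where t: "t \<in> S" "t \<otimes>\<^bsub>R\<^esub> (s \<otimes>\<^bsub>R\<^esub> r) = t \<otimes>\<^bsub>R\<^esub> (x \<otimes>\<^bsub>R\<^esub> u)"
    using left_localization_eqD[OF assms(1-3), of "s \<otimes>\<^bsub>R\<^esub> r" "x \<otimes>\<^bsub>R\<^esub> u"] r s sx u by auto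
  have "t \<in> carrier R" using t S by auto
  then have "(t \<otimes>\<^bsub>R\<^esub> s) \<otimes>\<^bsub>R\<^esub> r = (t \<otimes>\<^bsub>R\<^esub> x) \<otimes>\<^bsub>R\<^esub> u"
    using t s sx u r by (simp add: R.m_assoc)
  moreover have "t \<otimes>\<^bsub>R\<^esub> s \<in> S" using left_den_setD(4)[OF assms(2) t(1) sx(1)] .
  ultimately show ?thesis using \<open>t \<in> carrier R\<close> sx S by blast
qed

lemma left_den_set_units_preimage:
  assumes "ring R" "left_den_set R S" "is_left_localization R S Q \<sigma>"
  shows "left_den_set R {r \<in> carrier R. \<sigma> r \<in> Units Q}" (is "left_den_set R ?U")
proof -
  interpret Q: ring Q using is_left_localizationD(1)[OF assms(3)] .
  interpret h: ring_hom_ring R Q \<sigma> using ring_hom_ring_left_localization[OF assms(1,3)] .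
  have "S \<subseteq> ?U" using left_den_setD(1)[OF assms(2)] is_left_localizationD(3)[OF assms(3)] by auto
  have "\<zero>\<^bsub>Q\<^esub> \<notin> Units Q"
    using left_localization_one_neq_zero[OF assms] unfolding Units_def by auto
  then have mult: "mult_subset R ?U"
    unfolding mult_subset_def by auto
  have den: "\<exists>t\<in>?U. t \<otimes>\<^bsub>R\<^esub> r = \<zero>\<^bsub>R\<^esub>"
    if r: "r \<in> carrier R" and u: "u \<in> ?U" and ru: "r \<otimes>\<^bsub>R\<^esub> u = \<zero>\<^bsub>R\<^esub>" for r u
  proof -
    have u': "u \<in> carrier R" "\<sigma> u \<in> Units Q" using u by auto
    have "\<sigma> r = \<sigma> (r \<otimes>\<^bsub>R\<^esub> u) \<otimes>\<^bsub>Q\<^esub> inv\<^bsub>Q\<^esub> (\<sigma> u)"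
      using r u' by (simp add: Q.m_assoc)
    then have "\<sigma> r = \<zero>\<^bsub>Q\<^esub>" using ru u' by simp
    then have "r \<in> ass R S" using is_left_localizationD(5)[OF assms(3)] r by simp
    then show ?thesis using \<open>S \<subseteq> ?U\<close> unfolding ass_def by blast
  qed
  show ?thesis
    using mult units_preimage_left_ore[OF assms] den unfolding left_den_set_def left_ore_set_def by blast
qed

lemma maxDen_lD:
  assumes "S \<in> maxDen_l R"
  shows "left_den_set R S" "\<And>T. left_den_set R T \<Longrightarrow> S \<subseteq> T \<Longrightarrow> T = S"
  using assms unfolding maxDen_l_def Den_l_def by auto

lemma maxDen_l_units_preimage_eq:
  assumes "ring R" "S \<in> maxDen_l R" "is_left_localization R S Q \<sigma>"
  shows "{r \<in> carrier R. \<sigma> r \<in> Units Q} = S"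
proof (rule maxDen_lD(2)[OF assms(2)])
  show "left_den_set R {r \<in> carrier R. \<sigma> r \<in> Units Q}"
    using left_den_set_units_preimage[OF assms(1) maxDen_lD(1)[OF assms(2)] assms(3)] .
  show "S \<subseteq> {r \<in> carrier R. \<sigma> r \<in> Units Q}"
    using left_den_setD(1)[OF maxDen_lD(1)[OF assms(2)]] is_left_localizationD(3)[OF assms(3)] by auto
qed

lemma maxDen_l_cancel_left:
  assumes "ring R" "S \<in> maxDen_l R" "is_left_localization R S Q \<sigma>"
    "s \<in> S" "x \<in> carrier R" "s \<otimes>\<^bsub>R\<^esub> x \<in> S"
  shows "x \<in> S"
proof -
  interpret Q: ring Q using is_left_localizationD(1)[OF assms(3)] .
  interpret h: ring_hom_ring R Q \<sigma> using ring_hom_ring_left_localization[OF assms(1,3)] .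
  have s: "s \<in> carrier R" using assms(4) left_den_setD(1)[OF maxDen_lD(1)[OF assms(2)]] by auto
  have U: "{r \<in> carrier R. \<sigma> r \<in> Units Q} = S" using maxDen_l_units_preimage_eq[OF assms(1-3)] .
  have "\<sigma> (s \<otimes>\<^bsub>R\<^esub> x) \<in> Units Q" "\<sigma> s \<in> Units Q" using U assms(4,6) by blast+
  then have "\<sigma> x \<in> Units Q"
    using Q.prod_unit_l[of "\<sigma> s" "\<sigma> x"] s assms(5) by simp
  then show ?thesis using U assms(5) by blast
qed

lemma maxDen_l_division_ring_iff:
  assumes "ring R" "S \<in> maxDen_l R" "is_left_localization R S Q \<sigma>"
  shows "division_ring Q \<longleftrightarrow> carrier R - ass R S \<subseteq> S"
proof
  interpret h: ring_hom_ring R Q \<sigma> using ring_hom_ring_left_localization[OF assms(1,3)] .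
  assume "division_ring Q"
  then have "\<sigma> x \<in> Units Q" if "x \<in> carrier R - ass R S" for x
    using that is_left_localizationD(5)[OF assms(3)] unfolding division_ring_def by auto
  then show "carrier R - ass R S \<subseteq> S"
    using maxDen_l_units_preimage_eq[OF assms] by blast
next
  interpret Q: ring Q using is_left_localizationD(1)[OF assms(3)] .
  interpret h: ring_hom_ring R Q \<sigma> using ring_hom_ring_left_localization[OF assms(1,3)] .
  assume compl: "carrier R - ass R S \<subseteq> S"
  have "q \<in> Units Q" if q: "q \<in> carrier Q" "q \<noteq> \<zero>\<^bsub>Q\<^esub>" for q
  proof -
    obtain s r where sr: "s \<in> S" "r \<in> carrier R" "q = inv\<^bsub>Q\<^esub> (\<sigma> s) \<otimes>\<^bsub>Q\<^esub> \<sigma> r"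
      using is_left_localizationD(4)[OF assms(3) q(1)] by blast
    have s: "\<sigma> s \<in> Units Q" using is_left_localizationD(3)[OF assms(3) sr(1)] .
    then have "\<sigma> r \<noteq> \<zero>\<^bsub>Q\<^esub>" using sr q by auto
    then have "r \<in> S" using compl sr(2) is_left_localizationD(5)[OF assms(3)] by blast
    then show ?thesis using is_left_localizationD(3)[OF assms(3)] s sr(3) by simp
  qed
  then show "division_ring Q"
    unfolding division_ring_def
    using left_localization_one_neq_zero[OF assms(1) maxDen_lD(1)[OF assms(2)] assms(3)] Q.ring_axioms
    by blast
qed

lemma Den_l_chain_Union:
  assumes "C \<noteq> {}" "C \<subseteq> Den_l R" "chain\<^sub>\<subseteq> C"
  shows "\<Union>C \<in> Den_l R"
proof -
  have D: "\<And>D. D \<in> C \<Longrightarrow> left_den_set R D" using assms(2) unfolding Den_l_def by blast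
  have "s \<otimes>\<^bsub>R\<^esub> t \<in> \<Union>C" if st: "s \<in> \<Union>C" "t \<in> \<Union>C" for s t
  proof -
    obtain X Y where "X \<in> C" "Y \<in> C" "s \<in> X" "t \<in> Y" using st by blast
    then have "X \<subseteq> Y \<or> Y \<subseteq> X" using assms(3) unfolding chain_subset_def by blast
    then show ?thesis using D left_den_setD(4) \<open>X \<in> C\<close> \<open>Y \<in> C\<close> \<open>s \<in> X\<close> \<open>t \<in> Y\<close>
      by (metis UnionI subsetD)
  qed
  moreover have "\<Union>C \<subseteq> carrier R" "\<zero>\<^bsub>R\<^esub> \<notin> \<Union>C" using D left_den_setD(1,3) by blast+
  moreover have "\<one>\<^bsub>R\<^esub> \<in> \<Union>C" using D left_den_setD(2) assms(1) by blast
  ultimately have "mult_subset R (\<Union>C)" unfolding mult_subset_def by blast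
  moreover have "\<forall>r\<in>carrier R. \<forall>s\<in>\<Union>C. \<exists>s'\<in>\<Union>C. \<exists>r'\<in>carrier R. s' \<otimes>\<^bsub>R\<^esub> r = r' \<otimes>\<^bsub>R\<^esub> s"
    using D left_den_setD(5) by (meson UnionE UnionI)
  moreover have "\<forall>r\<in>carrier R. \<forall>s\<in>\<Union>C. r \<otimes>\<^bsub>R\<^esub> s = \<zero>\<^bsub>R\<^esub> \<longrightarrow> (\<exists>t\<in>\<Union>C. t \<otimes>\<^bsub>R\<^esub> r = \<zero>\<^bsub>R\<^esub>)"
    using D left_den_setD(6) by (meson UnionE UnionI)
  ultimately show ?thesis unfolding Den_l_def left_den_set_def left_ore_set_def by blast
qed

lemma exists_maxDen_l_superset:
  assumes "T \<in> Den_l R"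
  shows "\<exists>M\<in>maxDen_l R. T \<subseteq> M"
proof -
  let ?A = "{D \<in> Den_l R. T \<subseteq> D}"
  have "\<exists>U\<in>?A. \<forall>X\<in>C. X \<subseteq> U" if C: "C \<in> chains ?A" for C
  proof (cases "C = {}")
    case True
    then show ?thesis using assms by blast
  next
    case False
    have "C \<subseteq> ?A" "chain\<^sub>\<subseteq> C" using C unfolding chains_def by auto
    then have "\<Union>C \<in> Den_l R" "T \<subseteq> \<Union>C" using Den_l_chain_Union[OF False] False by auto
    then show ?thesis by blast
  qed
  then obtain M where M: "M \<in> ?A" and max: "\<forall>X\<in>?A. M \<subseteq> X \<longrightarrow> X = M"
    using Zorn_Lemma2[of ?A] by auto
  have "X = M" if "X \<in> Den_l R" "M \<subseteq> X" for X
    using max that M by auto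
  then show ?thesis using M unfolding maxDen_l_def by auto
qed

inductive_set mult_closure :: "('a, 'm) monoid_scheme \<Rightarrow> 'a set \<Rightarrow> 'a set" for R X where
  mult_closure_one: "\<one>\<^bsub>R\<^esub> \<in> mult_closure R X"
| mult_closure_mult: "g \<in> X \<Longrightarrow> m \<in> mult_closure R X \<Longrightarrow> g \<otimes>\<^bsub>R\<^esub> m \<in> mult_closure R X"

lemma mult_closure_subset_carrier:
  assumes "monoid R" "X \<subseteq> carrier R"
  shows "mult_closure R X \<subseteq> carrier R"
proof
  fix m assume "m \<in> mult_closure R X"
  then show "m \<in> carrier R"
  proof induction
    case mult_closure_one
    show ?case using monoid.one_closed[OF assms(1)] .
  next
    case (mult_closure_mult g m)
    have "g \<in> carrier R" using mult_closure_mult.hyps(1) assms(2) by blast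
    then show ?case using monoid.m_closed[OF assms(1) _ mult_closure_mult.IH] by blast
  qed
qed

lemma subset_mult_closure:
  assumes "monoid R" "X \<subseteq> carrier R"
  shows "X \<subseteq> mult_closure R X"
proof
  fix x assume "x \<in> X"
  then have "x \<otimes>\<^bsub>R\<^esub> \<one>\<^bsub>R\<^esub> \<in> mult_closure R X" by (blast intro: mult_closure.intros)
  then show "x \<in> mult_closure R X" using assms \<open>x \<in> X\<close> by (auto simp: monoid.r_one)
qed

lemma mult_closure_mult_closed:
  assumes "monoid R" "X \<subseteq> carrier R" "m \<in> mult_closure R X" "m' \<in> mult_closure R X"
  shows "m \<otimes>\<^bsub>R\<^esub> m' \<in> mult_closure R X"
  using assms(3)
proof induction
  case mult_closure_one
  have "m' \<in> carrier R" using mult_closure_subset_carrier[OF assms(1,2)] assms(4) by blast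
  then show ?case using assms(4) by (simp add: monoid.l_one[OF assms(1)])
next
  case (mult_closure_mult g m)
  have "g \<in> carrier R" "m \<in> carrier R" "m' \<in> carrier R"
    using mult_closure_mult.hyps mult_closure_subset_carrier[OF assms(1,2)] assms(2,4) by blast+
  then have "(g \<otimes>\<^bsub>R\<^esub> m) \<otimes>\<^bsub>R\<^esub> m' = g \<otimes>\<^bsub>R\<^esub> (m \<otimes>\<^bsub>R\<^esub> m')"
    by (simp add: monoid.m_assoc[OF assms(1)])
  then show ?case
    using mult_closure_mult.hyps(1) mult_closure_mult.IH by (simp add: mult_closure.mult_closure_mult)
qed

context
  fixes R :: "('a, 'm) ring_scheme" and F :: "'a set set"
  assumes ring_R: "ring R" and left_den_F: "\<And>D. D \<in> F \<Longrightarrow> left_den_set R D"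
begin

interpretation R: ring R by (rule ring_R)

lemma left_den_sets_Union_subset_carrier: "\<Union>F \<subseteq> carrier R"
  using left_den_setD(1)[OF left_den_F] by blast

lemma mult_closure_Union_subset_carrier: "mult_closure R (\<Union>F) \<subseteq> carrier R"
  using mult_closure_subset_carrier[OF R.monoid_axioms left_den_sets_Union_subset_carrier] .

lemma mult_closure_Union_left_ore:
  assumes "m \<in> mult_closure R (\<Union>F)" "r \<in> carrier R"
  shows "\<exists>m'\<in>mult_closure R (\<Union>F). \<exists>r'\<in>carrier R. m' \<otimes>\<^bsub>R\<^esub> r = r' \<otimes>\<^bsub>R\<^esub> m"
  using assms
proof (induction arbitrary: r)
  case mult_closure_one
  then have "\<one>\<^bsub>R\<^esub> \<otimes>\<^bsub>R\<^esub> r = r \<otimes>\<^bsub>R\<^esub> \<one>\<^bsub>R\<^esub>" by simp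
  then show ?case using mult_closure.mult_closure_one mult_closure_one by blast
next
  case (mult_closure_mult g m)
  obtain m1 r1 where m1: "m1 \<in> mult_closure R (\<Union>F)" "r1 \<in> carrier R" "m1 \<otimes>\<^bsub>R\<^esub> r = r1 \<otimes>\<^bsub>R\<^esub> m"
    using mult_closure_mult.IH[OF mult_closure_mult.prems] by blast
  obtain D where D: "D \<in> F" "g \<in> D" using mult_closure_mult.hyps(1) by blast
  obtain s r2 where s: "s \<in> D" "r2 \<in> carrier R" "s \<otimes>\<^bsub>R\<^esub> r1 = r2 \<otimes>\<^bsub>R\<^esub> g"
    using left_den_setD(5)[OF left_den_F[OF D(1)] m1(2) D(2)] by blast
  have c: "s \<in> carrier R" "g \<in> carrier R" "m \<in> carrier R" "m1 \<in> carrier R"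
    using left_den_sets_Union_subset_carrier mult_closure_Union_subset_carrier D s mult_closure_mult.hyps m1 by auto
  have "(s \<otimes>\<^bsub>R\<^esub> m1) \<otimes>\<^bsub>R\<^esub> r = s \<otimes>\<^bsub>R\<^esub> (r1 \<otimes>\<^bsub>R\<^esub> m)"
    using c mult_closure_mult.prems m1 by (simp add: R.m_assoc)
  also have "\<dots> = (r2 \<otimes>\<^bsub>R\<^esub> g) \<otimes>\<^bsub>R\<^esub> m" using c m1 s by (simp add: R.m_assoc[symmetric])
  also have "\<dots> = r2 \<otimes>\<^bsub>R\<^esub> (g \<otimes>\<^bsub>R\<^esub> m)" using c s by (simp add: R.m_assoc)
  finally have "(s \<otimes>\<^bsub>R\<^esub> m1) \<otimes>\<^bsub>R\<^esub> r = r2 \<otimes>\<^bsub>R\<^esub> (g \<otimes>\<^bsub>R\<^esub> m)" .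
  moreover have "s \<otimes>\<^bsub>R\<^esub> m1 \<in> mult_closure R (\<Union>F)"
    using s(1) D(1) m1(1) by (blast intro: mult_closure.mult_closure_mult)
  ultimately show ?case using s(2) by blast
qed

lemma mult_closure_Union_left_annihilator:
  assumes "m \<in> mult_closure R (\<Union>F)" "r \<in> carrier R" "r \<otimes>\<^bsub>R\<^esub> m = \<zero>\<^bsub>R\<^esub>"
  shows "\<exists>t\<in>mult_closure R (\<Union>F). t \<otimes>\<^bsub>R\<^esub> r = \<zero>\<^bsub>R\<^esub>"
  using assms
proof (induction arbitrary: r)
  case mult_closure_one
  then have "\<one>\<^bsub>R\<^esub> \<otimes>\<^bsub>R\<^esub> r = \<zero>\<^bsub>R\<^esub>" by simp
  then show ?case using mult_closure.mult_closure_one by blast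
next
  case (mult_closure_mult g m)
  obtain D where D: "D \<in> F" "g \<in> D" using mult_closure_mult.hyps(1) by blast
  have c: "g \<in> carrier R" "m \<in> carrier R"
    using left_den_sets_Union_subset_carrier mult_closure_Union_subset_carrier D mult_closure_mult.hyps by auto
  have "(r \<otimes>\<^bsub>R\<^esub> g) \<otimes>\<^bsub>R\<^esub> m = \<zero>\<^bsub>R\<^esub>" using mult_closure_mult.prems c by (simp add: R.m_assoc)
  then obtain m1 where m1: "m1 \<in> mult_closure R (\<Union>F)" "m1 \<otimes>\<^bsub>R\<^esub> (r \<otimes>\<^bsub>R\<^esub> g) = \<zero>\<^bsub>R\<^esub>"
    using mult_closure_mult.IH[of "r \<otimes>\<^bsub>R\<^esub> g"] mult_closure_mult.prems(1) c by auto
  have m1c: "m1 \<in> carrier R" using m1(1) mult_closure_Union_subset_carrier by auto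
  then have "(m1 \<otimes>\<^bsub>R\<^esub> r) \<otimes>\<^bsub>R\<^esub> g = \<zero>\<^bsub>R\<^esub>"
    using m1(2) mult_closure_mult.prems(1) c by (simp add: R.m_assoc)
  then obtain s where s: "s \<in> D" "s \<otimes>\<^bsub>R\<^esub> (m1 \<otimes>\<^bsub>R\<^esub> r) = \<zero>\<^bsub>R\<^esub>"
    using left_den_setD(6)[OF left_den_F[OF D(1)] _ D(2), of "m1 \<otimes>\<^bsub>R\<^esub> r"] m1c mult_closure_mult.prems(1)
    by auto
  have "s \<in> carrier R" using s D left_den_sets_Union_subset_carrier by auto
  then have "(s \<otimes>\<^bsub>R\<^esub> m1) \<otimes>\<^bsub>R\<^esub> r = \<zero>\<^bsub>R\<^esub>" using s m1c mult_closure_mult.prems(1) by (simp add: R.m_assoc)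
  moreover have "s \<otimes>\<^bsub>R\<^esub> m1 \<in> mult_closure R (\<Union>F)"
    using s(1) D(1) m1(1) by (blast intro: mult_closure.mult_closure_mult)
  ultimately show ?case by blast
qed

lemma left_den_set_mult_closure_Union:
  assumes "z \<in> Z" "Z \<subseteq> carrier R - {\<zero>\<^bsub>R\<^esub>}" "\<And>g w. g \<in> \<Union>F \<Longrightarrow> w \<in> Z \<Longrightarrow> g \<otimes>\<^bsub>R\<^esub> w \<in> Z"
  shows "left_den_set R (mult_closure R (\<Union>F))"
proof -
  have z: "z \<in> carrier R" using assms(1,2) by blast
  have Z_closed: "m \<otimes>\<^bsub>R\<^esub> z \<in> Z" if "m \<in> mult_closure R (\<Union>F)" for m
    using that
  proof induction
    case mult_closure_one
    show ?case using assms(1) z by simp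
  next
    case (mult_closure_mult g m)
    have "g \<in> carrier R" "m \<in> carrier R"
      using mult_closure_mult.hyps left_den_sets_Union_subset_carrier mult_closure_Union_subset_carrier by blast+
    then have "(g \<otimes>\<^bsub>R\<^esub> m) \<otimes>\<^bsub>R\<^esub> z = g \<otimes>\<^bsub>R\<^esub> (m \<otimes>\<^bsub>R\<^esub> z)" using z by (simp add: R.m_assoc)
    then show ?case using assms(3)[OF mult_closure_mult.hyps(1) mult_closure_mult.IH] by simp
  qed
  have "\<zero>\<^bsub>R\<^esub> \<notin> mult_closure R (\<Union>F)"
  proof
    assume "\<zero>\<^bsub>R\<^esub> \<in> mult_closure R (\<Union>F)"
    then have "\<zero>\<^bsub>R\<^esub> \<otimes>\<^bsub>R\<^esub> z \<in> Z" by (rule Z_closed)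
    then show False using z assms(2) by auto
  qed
  then have "mult_subset R (mult_closure R (\<Union>F))"
    unfolding mult_subset_def
    using mult_closure_Union_subset_carrier mult_closure.mult_closure_one
      mult_closure_mult_closed[OF R.monoid_axioms left_den_sets_Union_subset_carrier] by blast
  then show ?thesis
    unfolding left_den_set_def left_ore_set_def
    using mult_closure_Union_left_ore mult_closure_Union_left_annihilator by blast
qed

end

definition ass_Inter :: "('a, 'm) ring_scheme \<Rightarrow> (nat \<Rightarrow> 'a set) \<Rightarrow> nat set \<Rightarrow> 'a set" where
  "ass_Inter R S J = {x \<in> carrier R. \<forall>k\<in>J. x \<in> ass R (S k)}"

locale finite_maxDen_l =
  fixes R :: "('a, 'm) ring_scheme" and n :: nat and S :: "nat \<Rightarrow> 'a set"
    and Q :: "nat \<Rightarrow> ('b, 'n) ring_scheme" and \<sigma> :: "nat \<Rightarrow> 'a \<Rightarrow> 'b"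
  assumes ring_R: "ring R"
    and maxDen_l_eq: "maxDen_l R = S ` {..<n}"
    and inj_S: "inj_on S {..<n}"
    and localizations: "\<forall>i<n. is_left_localization R (S i) (Q i) (\<sigma> i)"
begin

lemma S_in_maxDen_l: "i < n \<Longrightarrow> S i \<in> maxDen_l R"
  using maxDen_l_eq by auto

lemma left_den_set_S: "i < n \<Longrightarrow> left_den_set R (S i)"
  using maxDen_lD(1)[OF S_in_maxDen_l] .

lemma S_subset_carrier: "i < n \<Longrightarrow> S i \<subseteq> carrier R"
  using left_den_setD(1)[OF left_den_set_S] .

lemma localization_S: "i < n \<Longrightarrow> is_left_localization R (S i) (Q i) (\<sigma> i)"
  using localizations by blast

lemma division_ring_Q_iff: "i < n \<Longrightarrow> division_ring (Q i) \<longleftrightarrow> carrier R - ass R (S i) \<subseteq> S i"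
  using maxDen_l_division_ring_iff[OF ring_R S_in_maxDen_l localization_S] by simp

lemma S_cancel_left:
  "i < n \<Longrightarrow> s \<in> S i \<Longrightarrow> x \<in> carrier R \<Longrightarrow> s \<otimes>\<^bsub>R\<^esub> x \<in> S i \<Longrightarrow> x \<in> S i"
  using maxDen_l_cancel_left[OF ring_R S_in_maxDen_l localization_S] by blast

lemma loc_radical_eq_ass_Inter: "loc_radical R = ass_Inter R S {..<n}"
  unfolding loc_radical_def ass_Inter_def maxDen_l_eq by auto

lemma zero_in_ass_Inter:
  assumes "J \<subseteq> {..<n}"
  shows "\<zero>\<^bsub>R\<^esub> \<in> ass_Inter R S J"
proof -
  interpret R: ring R by (rule ring_R)
  have "\<zero>\<^bsub>R\<^esub> \<in> ass R (S k)" if "k \<in> J" for k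
    using zero_in_ass[OF ring_R left_den_set_S] assms that by auto
  then show ?thesis unfolding ass_Inter_def by simp
qed

lemma ass_Inter_mult_left_closed:
  assumes "J \<subseteq> {..<n}" "x \<in> ass_Inter R S J" "r \<in> carrier R"
  shows "r \<otimes>\<^bsub>R\<^esub> x \<in> ass_Inter R S J"
proof -
  interpret R: ring R by (rule ring_R)
  have "r \<otimes>\<^bsub>R\<^esub> x \<in> ass R (S k)" if "k \<in> J" for k
    using ass_mult_left_closed[OF ring_R left_den_set_S _ assms(3)] assms(1,2) that
    unfolding ass_Inter_def by auto
  then show ?thesis using assms(2,3) unfolding ass_Inter_def by simp
qed

lemma ass_Inter_mult_right_closed:
  assumes "J \<subseteq> {..<n}" "x \<in> ass_Inter R S J" "r \<in> carrier R"
  shows "x \<otimes>\<^bsub>R\<^esub> r \<in> ass_Inter R S J"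
proof -
  interpret R: ring R by (rule ring_R)
  have "x \<otimes>\<^bsub>R\<^esub> r \<in> ass R (S k)" if "k \<in> J" for k
    using ass_mult_right_closed[OF ring_R left_den_set_S _ assms(3)] assms(1,2) that
    unfolding ass_Inter_def by auto
  then show ?thesis using assms(2,3) unfolding ass_Inter_def by simp
qed

lemma localizations_eq_iff:
  assumes "x \<in> carrier R" "y \<in> carrier R"
  shows "(\<lambda>i\<in>{..<n}. \<sigma> i x) = (\<lambda>i\<in>{..<n}. \<sigma> i y) \<longleftrightarrow> x \<ominus>\<^bsub>R\<^esub> y \<in> loc_radical R"
proof -
  interpret R: ring R by (rule ring_R)
  have "(\<lambda>i\<in>{..<n}. \<sigma> i x) = (\<lambda>i\<in>{..<n}. \<sigma> i y) \<longleftrightarrow> (\<forall>i<n. \<sigma> i x = \<sigma> i y)"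
  proof
    assume eq: "(\<lambda>i\<in>{..<n}. \<sigma> i x) = (\<lambda>i\<in>{..<n}. \<sigma> i y)"
    show "\<forall>i<n. \<sigma> i x = \<sigma> i y"
    proof (intro allI impI)
      fix i assume "i < n"
      then show "\<sigma> i x = \<sigma> i y" using fun_cong[OF eq, of i] by simp
    qed
  qed (intro restrict_ext, simp)
  also have "\<dots> \<longleftrightarrow> (\<forall>i<n. x \<ominus>\<^bsub>R\<^esub> y \<in> ass R (S i))"
    using left_localization_eq_iff[OF ring_R localization_S assms] by simp
  finally show ?thesis
    unfolding loc_radical_eq_ass_Inter ass_Inter_def using assms by auto
qed

lemma inj_localizations_iff:
  "inj_on (\<lambda>r. \<lambda>i\<in>{..<n}. \<sigma> i r) (carrier R) \<longleftrightarrow> loc_radical R = {\<zero>\<^bsub>R\<^esub>}"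
proof -
  interpret R: ring R by (rule ring_R)
  have "x = \<zero>\<^bsub>R\<^esub>"
    if inj: "inj_on (\<lambda>r. \<lambda>i\<in>{..<n}. \<sigma> i r) (carrier R)" and x: "x \<in> loc_radical R" for x
  proof -
    have "x \<in> carrier R" using x unfolding loc_radical_def by blast
    moreover have "x \<ominus>\<^bsub>R\<^esub> \<zero>\<^bsub>R\<^esub> = x" using \<open>x \<in> carrier R\<close> by (simp add: a_minus_def)
    ultimately show ?thesis
      using inj_onD[OF inj] localizations_eq_iff[of x "\<zero>\<^bsub>R\<^esub>"] x by auto
  qed
  moreover have "inj_on (\<lambda>r. \<lambda>i\<in>{..<n}. \<sigma> i r) (carrier R)" if "loc_radical R = {\<zero>\<^bsub>R\<^esub>}"
    using that localizations_eq_iff R.minus_eq_zero_iff by (intro inj_onI) auto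
  ultimately show ?thesis
    using zero_in_ass_Inter[of "{..<n}"] loc_radical_eq_ass_Inter by blast
qed

lemma left_localizable_nonzero_in_S:
  assumes "left_localizable_ring R" "x \<in> carrier R" "x \<noteq> \<zero>\<^bsub>R\<^esub>"
  shows "\<exists>k<n. x \<in> S k"
proof -
  obtain T where "T \<in> Den_l R" "x \<in> T"
    using assms unfolding left_localizable_ring_def left_localizable_elem_def by blast
  then obtain M where "M \<in> maxDen_l R" "x \<in> M" using exists_maxDen_l_superset by blast
  then show ?thesis using maxDen_l_eq by auto
qed

lemma left_localizable_imp_loc_radical_zero:
  assumes "left_localizable_ring R"
  shows "loc_radical R = {\<zero>\<^bsub>R\<^esub>}"
proof -
  have "x = \<zero>\<^bsub>R\<^esub>" if x: "x \<in> ass_Inter R S {..<n}" for x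
  proof (rule ccontr)
    assume "x \<noteq> \<zero>\<^bsub>R\<^esub>"
    moreover have "x \<in> carrier R" using x unfolding ass_Inter_def by simp
    ultimately obtain k where k: "k < n" "x \<in> S k"
      using left_localizable_nonzero_in_S[OF assms] by blast
    moreover have "x \<in> ass R (S k)" using x k(1) unfolding ass_Inter_def by simp
    ultimately show False using left_den_set_Int_ass[OF left_den_set_S[OF k(1)]] by blast
  qed
  moreover have "\<zero>\<^bsub>R\<^esub> \<in> ass_Inter R S {..<n}" by (rule zero_in_ass_Inter) simp
  ultimately show ?thesis unfolding loc_radical_eq_ass_Inter by blast
qed

lemma division_rings_imp_left_localizable:
  assumes "loc_radical R = {\<zero>\<^bsub>R\<^esub>}" "\<forall>i<n. division_ring (Q i)"
  shows "left_localizable_ring R"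
  unfolding left_localizable_ring_def left_localizable_elem_def
proof (intro ballI impI)
  fix x assume x: "x \<in> carrier R" "x \<noteq> \<zero>\<^bsub>R\<^esub>"
  then obtain k where k: "k < n" "x \<notin> ass R (S k)"
    using assms(1) unfolding loc_radical_eq_ass_Inter ass_Inter_def by blast
  then have "x \<in> S k"
    using division_ring_Q_iff assms(2) x(1) by blast
  then show "\<exists>T\<in>Den_l R. x \<in> T" using S_in_maxDen_l[OF k(1)] unfolding maxDen_l_def by blast
qed

lemma left_localizable_ass_Inter_compl_in_S:
  assumes "left_localizable_ring R" "i < n" "z \<in> ass_Inter R S ({..<n} - {i})" "z \<noteq> \<zero>\<^bsub>R\<^esub>"
  shows "z \<in> S i"
proof -
  obtain k where k: "k < n" "z \<in> S k"
    using left_localizable_nonzero_in_S[OF assms(1) _ assms(4)] assms(3) unfolding ass_Inter_def by blast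
  have "z \<notin> ass R (S k)" using left_den_set_Int_ass[OF left_den_set_S[OF k(1)]] k(2) by blast
  then have "k = i" using assms(3) k(1) unfolding ass_Inter_def by blast
  then show ?thesis using k(2) by simp
qed

lemma division_ring_if_ass_Inter_compl_nonzero:
  assumes "left_localizable_ring R" "i < n"
    and y: "y \<in> ass_Inter R S ({..<n} - {i})" "y \<noteq> \<zero>\<^bsub>R\<^esub>"
  shows "division_ring (Q i)"
proof -
  have y_S: "y \<in> S i" using left_localizable_ass_Inter_compl_in_S[OF assms] .
  have "x \<in> S i" if x: "x \<in> carrier R" "x \<notin> ass R (S i)" for x
  proof -
    have "y \<otimes>\<^bsub>R\<^esub> x \<notin> ass R (S i)"
      using ass_cancel_left[OF ring_R left_den_set_S[OF assms(2)] y_S x(1)] x(2) by blast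
    then have "y \<otimes>\<^bsub>R\<^esub> x \<noteq> \<zero>\<^bsub>R\<^esub>" using zero_in_ass[OF ring_R left_den_set_S[OF assms(2)]] by auto
    moreover have "y \<otimes>\<^bsub>R\<^esub> x \<in> ass_Inter R S ({..<n} - {i})"
      using ass_Inter_mult_right_closed[OF _ y(1) x(1)] by blast
    ultimately have "y \<otimes>\<^bsub>R\<^esub> x \<in> S i"
      using left_localizable_ass_Inter_compl_in_S[OF assms(1,2)] by blast
    then show ?thesis
      using S_cancel_left[OF assms(2) y_S x(1)] by blast
  qed
  then show ?thesis
    using division_ring_Q_iff[OF assms(2)] by blast
qed

lemma S_meets_ass_if_division_ring:
  assumes "i < n" "g < n" "i \<noteq> g" "division_ring (Q g)"
  shows "S i \<inter> ass R (S g) \<noteq> {}"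
proof
  assume "S i \<inter> ass R (S g) = {}"
  then have "S i \<subseteq> carrier R - ass R (S g)" using S_subset_carrier[OF assms(1)] by blast
  also have "\<dots> \<subseteq> S g"
    using division_ring_Q_iff[OF assms(2)] assms(4) by blast
  finally have "S g = S i" by (rule maxDen_lD(2)[OF S_in_maxDen_l[OF assms(1)] left_den_set_S[OF assms(2)]])
  then show False using inj_S assms(1-3) by (auto dest: inj_onD)
qed

lemma S_meets_ass_Inter:
  assumes "finite G" "G \<subseteq> {..<n}" "i < n" "\<forall>g\<in>G. S i \<inter> ass R (S g) \<noteq> {}"
  shows "S i \<inter> ass_Inter R S G \<noteq> {}"
  using assms
proof (induction G rule: finite_induct)
  case empty
  then show ?case using left_den_setD(1,2)[OF left_den_set_S[OF assms(3)]] unfolding ass_Inter_def by blast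
next
  case (insert g G)
  obtain p where p: "p \<in> S i" "p \<in> ass_Inter R S G" using insert by blast
  obtain s where s: "s \<in> S i" "s \<in> ass R (S g)" using insert.prems(3) by blast
  have "g < n" using insert.prems(1) by blast
  have "s \<in> carrier R" "p \<in> carrier R" using s(1) p(1) S_subset_carrier[OF assms(3)] by auto
  have "p \<otimes>\<^bsub>R\<^esub> s \<in> S i" using left_den_setD(4)[OF left_den_set_S[OF assms(3)] p(1) s(1)] .
  moreover have "p \<otimes>\<^bsub>R\<^esub> s \<in> ass_Inter R S G"
    using ass_Inter_mult_right_closed[OF _ p(2) \<open>s \<in> carrier R\<close>] insert.prems(1) by blast
  moreover have "p \<otimes>\<^bsub>R\<^esub> s \<in> ass R (S g)"
    using ass_mult_left_closed[OF ring_R left_den_set_S[OF \<open>g < n\<close>] s(2) \<open>p \<in> carrier R\<close>] .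
  ultimately show ?case unfolding ass_Inter_def by blast
qed

text \<open>If no index outside \<open>J\<close> cuts \<open>ass_Inter R S J\<close> further down to zero, then the
  multiplicative closure of all \<open>S k\<close> with \<open>k \<notin> J\<close> acts on its nonzero part, hence is a left
  denominator set containing each such \<open>S k\<close>; by maximality they all coincide.\<close>

lemma ass_Inter_maximal_compl_subsingleton:
  assumes "J \<subseteq> {..<n}" "ass_Inter R S J \<noteq> {\<zero>\<^bsub>R\<^esub>}"
    and maximal: "\<And>k. k < n \<Longrightarrow> k \<notin> J \<Longrightarrow> ass_Inter R S (insert k J) = {\<zero>\<^bsub>R\<^esub>}"
    and "k1 \<in> {..<n} - J" "k2 \<in> {..<n} - J"
  shows "k1 = k2"
proof -
  let ?F = "S ` ({..<n} - J)" and ?Z = "ass_Inter R S J - {\<zero>\<^bsub>R\<^esub>}"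
  have F: "\<And>D. D \<in> ?F \<Longrightarrow> left_den_set R D" using left_den_set_S by auto
  obtain z where "z \<in> ?Z" using assms(2) zero_in_ass_Inter[OF assms(1)] by blast
  have "g \<otimes>\<^bsub>R\<^esub> w \<in> ?Z" if g: "g \<in> \<Union>?F" and w: "w \<in> ?Z" for g w
  proof -
    obtain k where k: "k < n" "k \<notin> J" "g \<in> S k" using g by blast
    have "g \<in> carrier R" "w \<in> carrier R" using k S_subset_carrier w unfolding ass_Inter_def by auto
    have "w \<notin> ass R (S k)" using maximal[OF k(1,2)] w unfolding ass_Inter_def by blast
    then have "g \<otimes>\<^bsub>R\<^esub> w \<noteq> \<zero>\<^bsub>R\<^esub>" using k(3) \<open>w \<in> carrier R\<close> unfolding ass_def by blast
    then show ?thesis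
      using ass_Inter_mult_left_closed[OF assms(1) _ \<open>g \<in> carrier R\<close>] w by blast
  qed
  then have den: "left_den_set R (mult_closure R (\<Union>?F))"
    using left_den_set_mult_closure_Union[OF ring_R F \<open>z \<in> ?Z\<close>] unfolding ass_Inter_def by blast
  have sub: "\<Union>?F \<subseteq> mult_closure R (\<Union>?F)"
    using subset_mult_closure[OF ring.is_monoid[OF ring_R] left_den_sets_Union_subset_carrier[OF ring_R F]] .
  have "mult_closure R (\<Union>?F) = S k" if "k \<in> {..<n} - J" for k
    using maxDen_lD(2)[OF S_in_maxDen_l den] that sub by blast
  then have "S k1 = S k2" using assms(4,5) by metis
  then show ?thesis using inj_S assms(4,5) by (auto dest: inj_onD)
qed

lemma ass_Inter_maximal_eq_compl:
  assumes "left_localizable_ring R" "J \<subseteq> {..<n}" "ass_Inter R S J \<noteq> {\<zero>\<^bsub>R\<^esub>}"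
    and maximal: "\<And>k. k < n \<Longrightarrow> k \<notin> J \<Longrightarrow> ass_Inter R S (insert k J) = {\<zero>\<^bsub>R\<^esub>}"
  shows "\<exists>i<n. J = {..<n} - {i}"
proof -
  have "J \<noteq> {..<n}"
    using assms(3) left_localizable_imp_loc_radical_zero[OF assms(1)] loc_radical_eq_ass_Inter by metis
  then obtain i where i: "i \<in> {..<n} - J" using assms(2) by blast
  have "k \<in> J" if "k \<in> {..<n} - {i}" for k
    using ass_Inter_maximal_compl_subsingleton[OF assms(2,3) maximal, of k i] that i by blast
  then have "J = {..<n} - {i}" using assms(2) i by blast
  then show ?thesis using i by blast
qed

text \<open>Indices \<open>g\<close> with \<open>ass_Inter R S ({..<n} - {g}) \<noteq> {\<zero>}\<close> have division rings as localizations,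
  so every other \<open>S i\<close> meets \<open>ass R (S g)\<close>. A bad index \<open>i\<close> would therefore give a nonzero element
  of \<open>ass_Inter\<close> over all good indices; enlarging that index set maximally yields the complement of
  a single index, which is then good but was not among the good ones.\<close>

lemma left_localizable_ass_Inter_compl_nonzero:
  assumes "left_localizable_ring R" "i < n"
  shows "ass_Inter R S ({..<n} - {i}) \<noteq> {\<zero>\<^bsub>R\<^esub>}"
proof
  assume bad: "ass_Inter R S ({..<n} - {i}) = {\<zero>\<^bsub>R\<^esub>}"
  define G where "G = {g \<in> {..<n}. ass_Inter R S ({..<n} - {g}) \<noteq> {\<zero>\<^bsub>R\<^esub>}}"
  have G: "G \<subseteq> {..<n}" "finite G" unfolding G_def by (blast, simp)
  have "S i \<inter> ass R (S g) \<noteq> {}" if g: "g \<in> G" for g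
  proof -
    have "g < n" "ass_Inter R S ({..<n} - {g}) \<noteq> {\<zero>\<^bsub>R\<^esub>}" using g unfolding G_def by auto
    moreover have "\<zero>\<^bsub>R\<^esub> \<in> ass_Inter R S ({..<n} - {g})" by (rule zero_in_ass_Inter) blast
    ultimately obtain y where "y \<in> ass_Inter R S ({..<n} - {g})" "y \<noteq> \<zero>\<^bsub>R\<^esub>" by blast
    then have "division_ring (Q g)"
      using division_ring_if_ass_Inter_compl_nonzero[OF assms(1) \<open>g < n\<close>] by blast
    moreover have "g \<noteq> i" using \<open>ass_Inter R S ({..<n} - {g}) \<noteq> _\<close> bad by blast
    ultimately show ?thesis using S_meets_ass_if_division_ring[OF assms(2) \<open>g < n\<close>] by blast
  qed
  then obtain p where p: "p \<in> S i" "p \<in> ass_Inter R S G"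
    using S_meets_ass_Inter[OF G(2,1) assms(2)] by blast
  then have "p \<noteq> \<zero>\<^bsub>R\<^esub>" using left_den_setD(3)[OF left_den_set_S[OF assms(2)]] by blast
  define A where "A = {J. G \<subseteq> J \<and> J \<subseteq> {..<n} \<and> ass_Inter R S J \<noteq> {\<zero>\<^bsub>R\<^esub>}}"
  have "G \<in> A" unfolding A_def using G(1) p(2) \<open>p \<noteq> \<zero>\<^bsub>R\<^esub>\<close> by blast
  moreover have "finite A" unfolding A_def by (rule finite_subset[of _ "Pow {..<n}"]) auto
  ultimately obtain J where J: "J \<in> A" and max: "\<And>J'. J' \<in> A \<Longrightarrow> J \<subseteq> J' \<Longrightarrow> J = J'"
    using finite_has_maximal[of A] by blast
  have J_A: "G \<subseteq> J" "J \<subseteq> {..<n}" "ass_Inter R S J \<noteq> {\<zero>\<^bsub>R\<^esub>}" using J unfolding A_def by auto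
  have "ass_Inter R S (insert k J) = {\<zero>\<^bsub>R\<^esub>}" if k: "k < n" "k \<notin> J" for k
  proof (rule ccontr)
    assume "ass_Inter R S (insert k J) \<noteq> {\<zero>\<^bsub>R\<^esub>}"
    then have "insert k J \<in> A" unfolding A_def using J_A k by auto
    then show False using max[of "insert k J"] k(2) by blast
  qed
  then obtain j where j: "j < n" "J = {..<n} - {j}"
    using ass_Inter_maximal_eq_compl[OF assms(1) J_A(2,3)] by blast
  then have "j \<in> G" unfolding G_def using J_A(3) by simp
  then show False using J_A(1) j(2) by blast
qed

lemma left_localizable_imp_division_rings:
  assumes "left_localizable_ring R"
  shows "\<forall>i<n. division_ring (Q i)"
proof (intro allI impI)
  fix i assume "i < n"
  then obtain y where "y \<in> ass_Inter R S ({..<n} - {i})" "y \<noteq> \<zero>\<^bsub>R\<^esub>"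
    using left_localizable_ass_Inter_compl_nonzero[OF assms] zero_in_ass_Inter[of "{..<n} - {i}"] by blast
  then show "division_ring (Q i)" using division_ring_if_ass_Inter_compl_nonzero[OF assms \<open>i < n\<close>] by blast
qed

end

theorem theorem3p5:
  fixes R :: "('a, 'm) ring_scheme"
    and n :: nat
    and S :: "nat \<Rightarrow> 'a set"
    and Q :: "nat \<Rightarrow> ('b, 'n) ring_scheme"
    and \<sigma> :: "nat \<Rightarrow> 'a \<Rightarrow> 'b"
  assumes "ring R"
    and "maxDen_l R = S ` {..<n}"
    and "inj_on S {..<n}"
    and "\<forall>i<n. is_left_localization R (S i) (Q i) (\<sigma> i)"
  shows "(left_localizable_ring R \<longleftrightarrow>
            (loc_radical R = {\<zero>\<^bsub>R\<^esub>} \<and> (\<forall>i<n. division_ring (Q i))))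
       \<and> ((loc_radical R = {\<zero>\<^bsub>R\<^esub>} \<and> (\<forall>i<n. division_ring (Q i))) \<longleftrightarrow>
            (inj_on (\<lambda>r. \<lambda>i\<in>{..<n}. \<sigma> i r) (carrier R) \<and> (\<forall>i<n. division_ring (Q i))))"
proof -
  interpret finite_maxDen_l R n S Q \<sigma> using finite_maxDen_l.intro[OF assms] .
  show ?thesis
    using left_localizable_imp_loc_radical_zero left_localizable_imp_division_rings
      division_rings_imp_left_localizable inj_localizations_iff by blast
qed

end
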